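(* Let $\boldsymbol{A}$ be the adjacency matrix of an undirected graph without self-loops on a finite vertex set $\boldsymbol{V}=\{1,\dots,N\}$. Let $\mathcal{R}_e\subset\boldsymbol{V}$ be a nonempty set of egos, $n_e=|\mathcal{R}_e|$, and $\mathcal{R}_a\subset\boldsymbol{V}\setminus\mathcal{R}_e$ a set of alters, each alter $j$ having a unique recruiting ego $e(j)\in\mathcal{R}_e$ with $A_{j\,e(j)}=1$. Let $\boldsymbol{Z}\in\{0,1\}^N$ have independent components with $\Pr(Z_i=1)=p_z\,\mathbb{I}\{i\in\mathcal{R}_e\}$ for a known $p_z\in(0,1)$, and let $F_i=\mathbb{I}\{\sum_{j\neq i}Z_jA_{ij}>0\}$. Each unit $i\in\mathcal{R}_e\cup\mathcal{R}_a$ has fixed real potential outcomes $Y_i(z,f)$, $z,f\in\{0,1\}$, and observed outcome $Y_i=\sum_{z,f\in\{0,1\}}Y_i(z,f)\mathbb{I}\{Z_i=z,F_i=f\}$. Assume there is a constant $\kappa$ such that $Y_i(1,1)-Y_i(0,1)=\kappa[Y_i(1,0)-Y_i(0,0)]$ for all $i\in\mathcal{R}_e$. For $i\in\mathcal{R}_e$ let $\pi_i^e=\Pr(F_i=1)$ (over $\boldsymbol{Z}$), and assume $1+\pi_i^e(\kappa-1)\neq0$ for all $i\in\mathcal{R}_e$. Define $$DE=\frac1{n_e}\sum_{i\in\mathcal{R}_e}[Y_i(1,0)-Y_i(0,0)],\qquad \widehat{DE}_{adj}=\frac1{n_e}\sum_{i\in\mathcal{R}_e}\frac{1}{1+\pi_i^e(\kappa-1)}\Big[\frac{\mathbb{I}\{Z_i=1\}Y_i}{p_z}-\frac{\mathbb{I}\{Z_i=0\}Y_i}{1-p_z}\Big].$$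 Then $\mathbb{E}_{\boldsymbol{Z}}[\widehat{DE}_{adj}]=DE$.
   Context: Design-based setting: the network, the sample, the recruitment map and the potential outcomes are fixed; the only randomness is the treatment assignment $\boldsymbol{Z}$, and expectations are over $\boldsymbol{Z}$. The observed network links each alter only to its recruiting ego, while the true network $\boldsymbol{A}$ may contain ego–ego edges. *)

theory Defs
  imports "HOL-Probability.Probability"
begin

text \<open>Treatment assignment Z : nat \<Rightarrow> bool (value False outside V).\<close>

definition Zdist :: "nat \<Rightarrow> nat set \<Rightarrow> real \<Rightarrow> (nat \<Rightarrow> bool) pmf" where
  "Zdist N Eg pz = Pi_pmf {1..N} False (\<lambda>i. bernoulli_pmf (if i \<in> Eg then pz else 0))"

definition exposure :: "nat \<Rightarrow> (nat \<Rightarrow> nat \<Rightarrow> real) \<Rightarrow> (nat \<Rightarrow> bool) \<Rightarrow> nat \<Rightarrow> bool" where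
  "exposure N A Z i = ((\<Sum>j\<in>{1..N} - {i}. of_bool (Z j) * A i j) > 0)"

definition obs_outcome :: "nat \<Rightarrow> (nat \<Rightarrow> nat \<Rightarrow> real) \<Rightarrow> (nat \<Rightarrow> bool \<Rightarrow> bool \<Rightarrow> real)
    \<Rightarrow> (nat \<Rightarrow> bool) \<Rightarrow> nat \<Rightarrow> real" where
  "obs_outcome N A Y Z i =
     (\<Sum>z\<in>{False, True}. \<Sum>f\<in>{False, True}.
        Y i z f * of_bool (Z i = z \<and> exposure N A Z i = f))"

definition pi_e :: "nat \<Rightarrow> (nat \<Rightarrow> nat \<Rightarrow> real) \<Rightarrow> nat set \<Rightarrow> real \<Rightarrow> nat \<Rightarrow> real" where
  "pi_e N A Eg pz i = measure_pmf.prob (Zdist N Eg pz) {Z. exposure N A Z i}"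

definition DE :: "nat set \<Rightarrow> (nat \<Rightarrow> bool \<Rightarrow> bool \<Rightarrow> real) \<Rightarrow> real" where
  "DE Eg Y = (1 / real (card Eg)) * (\<Sum>i\<in>Eg. Y i True False - Y i False False)"

definition DE_adj_hat :: "nat \<Rightarrow> (nat \<Rightarrow> nat \<Rightarrow> real) \<Rightarrow> nat set \<Rightarrow> real \<Rightarrow> real
    \<Rightarrow> (nat \<Rightarrow> bool \<Rightarrow> bool \<Rightarrow> real) \<Rightarrow> (nat \<Rightarrow> bool) \<Rightarrow> real" where
  "DE_adj_hat N A Eg pz \<kappa> Y Z = (1 / real (card Eg)) *
     (\<Sum>i\<in>Eg. (1 / (1 + pi_e N A Eg pz i * (\<kappa> - 1))) *
        (of_bool (Z i) * obs_outcome N A Y Z i / pz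
         - of_bool (\<not> Z i) * obs_outcome N A Y Z i / (1 - pz)))"

end

theory Submission
  imports Defs
begin

(* Write tau_i = Y_i(1,0) - Y_i(0,0) and pi_i = Pr(F_i = 1). The exposure F_i depends only on the
   coordinates of Z other than Z_i, so Z_i is independent of F_i and the inverse-probability-weighted
   contrast of ego i has expectation E[Y_i(1,F_i)] - E[Y_i(0,F_i)] = tau_i + pi_i (kappa - 1) tau_i.
   The weight 1 / (1 + pi_i (kappa - 1)) cancels this factor, and averaging over the egos gives DE. *)

lemma finite_set_pmf_Pi_pmf:
  fixes p :: "'a \<Rightarrow> 'b::finite pmf"
  assumes "finite B"
  shows "finite (set_pmf (Pi_pmf B d p))"
  using assms by (subst set_Pi_pmf) (auto intro!: finite_PiE_dflt)

lemma expectation_Pi_pmf_coordinate_indep: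
  fixes p :: "'a \<Rightarrow> 'b::finite pmf" and G :: "'b \<Rightarrow> 'c \<Rightarrow> real"
  assumes B: "finite B" "i \<in> B" and h: "\<And>Z y. h (Z(i := y)) = h Z"
  shows "measure_pmf.expectation (Pi_pmf B d p) (\<lambda>Z. G (Z i) (h Z)) =
    (\<Sum>y\<in>UNIV. pmf (p i) y * measure_pmf.expectation (Pi_pmf B d p) (\<lambda>Z. G y (h Z)))"
proof -
  define P' where "P' = Pi_pmf (B - {i}) d p"
  have "Pi_pmf B d p = Pi_pmf (insert i (B - {i})) d p"
    using B by (simp add: insert_absorb)
  also have "\<dots> = map_pmf (\<lambda>(y, Z). Z(i := y)) (pair_pmf (p i) P')"
    using B unfolding P'_def by (intro Pi_pmf_insert) auto
  finally have decomp: "Pi_pmf B d p = map_pmf (\<lambda>(y, Z). Z(i := y)) (pair_pmf (p i) P')" .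
  have split: "measure_pmf.expectation (Pi_pmf B d p) (\<lambda>Z. g (Z i) (h Z)) =
      (\<Sum>y\<in>UNIV. pmf (p i) y * measure_pmf.expectation P' (\<lambda>Z. g y (h Z)))"
    for g :: "'b \<Rightarrow> 'c \<Rightarrow> real"
  proof -
    have "measure_pmf.expectation (Pi_pmf B d p) (\<lambda>Z. g (Z i) (h Z)) =
        measure_pmf.expectation (pair_pmf (p i) P') (\<lambda>(y, Z). g y (h Z))"
      unfolding decomp by (simp add: case_prod_unfold h)
    also have "\<dots> = (\<Sum>y\<in>UNIV. pmf (p i) y *\<^sub>R
        measure_pmf.expectation (P' \<bind> (\<lambda>Z. return_pmf (y, Z))) (\<lambda>(y, Z). g y (h Z)))"
      unfolding pair_pmf_def using B
      by (intro pmf_expectation_bind)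
        (auto simp: P'_def map_pmf_def[symmetric] intro!: finite_imageI finite_set_pmf_Pi_pmf)
    finally show ?thesis by (simp add: map_pmf_def[symmetric])
  qed
  have "measure_pmf.expectation (Pi_pmf B d p) (\<lambda>Z. G y (h Z)) =
      measure_pmf.expectation P' (\<lambda>Z. G y (h Z))" for y
    using split[of "\<lambda>_. G y"] by (simp add: sum_distrib_right[symmetric] sum_pmf_eq_1)
  then show ?thesis by (simp add: split)
qed

lemma expectation_bool_valued:
  fixes G :: "bool \<Rightarrow> real"
  shows "measure_pmf.expectation P (\<lambda>x. G (h x)) =
    G False + (G True - G False) * measure_pmf.prob P {x. h x}"
proof -
  have two_valued: "(\<lambda>x. G (h x)) = (\<lambda>x. G False + (G True - G False) * indicator {x. h x} x)"
    by (auto simp: fun_eq_iff indicator_def)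
  show ?thesis unfolding two_valued
    by (subst Bochner_Integration.integral_add) (auto simp: measure_pmf.emeasure_eq_measure)
qed

lemma exposure_fun_upd_self: "exposure N A (Z(i := b)) i = exposure N A Z i"
  unfolding exposure_def by (intro arg_cong2[where f = "(<)"] refl sum.cong) auto

lemma obs_outcome_eq: "obs_outcome N A Y Z i = Y i (Z i) (exposure N A Z i)"
  unfolding obs_outcome_def by (cases "Z i"; cases "exposure N A Z i") auto

lemma finite_set_pmf_Zdist: "finite (set_pmf (Zdist N Eg pz))"
  unfolding Zdist_def by (simp add: finite_set_pmf_Pi_pmf)

lemma expectation_Zdist_treatment_indep_exposure:
  fixes G :: "bool \<Rightarrow> bool \<Rightarrow> real"
  assumes "i \<in> Eg" "Eg \<subseteq> {1..N}" "0 \<le> pz" "pz \<le> 1"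
  shows "measure_pmf.expectation (Zdist N Eg pz) (\<lambda>Z. G (Z i) (exposure N A Z i)) =
    pz * measure_pmf.expectation (Zdist N Eg pz) (\<lambda>Z. G True (exposure N A Z i))
    + (1 - pz) * measure_pmf.expectation (Zdist N Eg pz) (\<lambda>Z. G False (exposure N A Z i))"
  using assms unfolding Zdist_def
  by (subst expectation_Pi_pmf_coordinate_indep) (auto simp: exposure_fun_upd_self UNIV_bool)

lemma expectation_ipw_contrast:
  assumes i: "i \<in> Eg" and Eg: "Eg \<subseteq> {1..N}" and pz: "0 < pz" "pz < 1"
    and kappa: "Y i True True - Y i False True = \<kappa> * (Y i True False - Y i False False)"
  shows "measure_pmf.expectation (Zdist N Eg pz)
      (\<lambda>Z. of_bool (Z i) * obs_outcome N A Y Z i / pz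
         - of_bool (\<not> Z i) * obs_outcome N A Y Z i / (1 - pz)) =
    (1 + pi_e N A Eg pz i * (\<kappa> - 1)) * (Y i True False - Y i False False)"
proof -
  let ?E = "measure_pmf.expectation (Zdist N Eg pz)"
  let ?\<pi> = "pi_e N A Eg pz i"
  have "?E (\<lambda>Z. of_bool (Z i) * obs_outcome N A Y Z i / pz
         - of_bool (\<not> Z i) * obs_outcome N A Y Z i / (1 - pz)) =
      ?E (\<lambda>Z. (\<lambda>z f. of_bool z * Y i z f / pz - of_bool (\<not> z) * Y i z f / (1 - pz))
        (Z i) (exposure N A Z i))"
    by (simp add: obs_outcome_eq)
  also have "\<dots> = pz * ?E (\<lambda>Z. Y i True (exposure N A Z i) / pz)
      + (1 - pz) * ?E (\<lambda>Z. - (Y i False (exposure N A Z i) / (1 - pz)))"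
    using i Eg pz by (subst expectation_Zdist_treatment_indep_exposure) simp_all
  also have "\<dots> = ?E (\<lambda>Z. Y i True (exposure N A Z i)) - ?E (\<lambda>Z. Y i False (exposure N A Z i))"
    using pz by simp
  also have "\<dots> = (Y i True False + (Y i True True - Y i True False) * ?\<pi>)
      - (Y i False False + (Y i False True - Y i False False) * ?\<pi>)"
    unfolding pi_e_def
    by (simp only: expectation_bool_valued[where G = "Y i True"]
        expectation_bool_valued[where G = "Y i False"])
  also have "\<dots> = (Y i True False - Y i False False)
      + ?\<pi> * ((Y i True True - Y i False True) - (Y i True False - Y i False False))"
    by (simp add: algebra_simps)
  also have "\<dots> = (1 + ?\<pi> * (\<kappa> - 1)) * (Y i True False - Y i False False)"
    unfolding kappa by (simp add: algebra_simps)
  finally show ?thesis .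
qed

theorem proposition3:
  fixes N :: nat
    and A :: "nat \<Rightarrow> nat \<Rightarrow> real"
    and Eg Al :: "nat set"
    and e :: "nat \<Rightarrow> nat"
    and pz \<kappa> :: real
    and Y :: "nat \<Rightarrow> bool \<Rightarrow> bool \<Rightarrow> real"
  assumes A_01: "\<forall>i\<in>{1..N}. \<forall>j\<in>{1..N}. A i j = 0 \<or> A i j = 1"
    and A_sym: "\<forall>i\<in>{1..N}. \<forall>j\<in>{1..N}. A i j = A j i"
    and A_noloop: "\<forall>i\<in>{1..N}. A i i = 0"
    and Eg_sub: "Eg \<subseteq> {1..N}" and Eg_ne: "Eg \<noteq> {}"
    and Al_sub: "Al \<subseteq> {1..N} - Eg"
    and recruit: "\<forall>j\<in>Al. e j \<in> Eg \<and> A j (e j) = 1"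
    and pz: "0 < pz" "pz < 1"
    and kappa: "\<forall>i\<in>Eg. Y i True True - Y i False True = \<kappa> * (Y i True False - Y i False False)"
    and nonzero: "\<forall>i\<in>Eg. 1 + pi_e N A Eg pz i * (\<kappa> - 1) \<noteq> 0"
  shows "measure_pmf.expectation (Zdist N Eg pz) (DE_adj_hat N A Eg pz \<kappa> Y) = DE Eg Y"
proof -
  define ipw where "ipw i Z = 1 / (1 + pi_e N A Eg pz i * (\<kappa> - 1)) *
    (of_bool (Z i) * obs_outcome N A Y Z i / pz - of_bool (\<not> Z i) * obs_outcome N A Y Z i / (1 - pz))"
    for i Z
  have ipw_unbiased: "measure_pmf.expectation (Zdist N Eg pz) (ipw i) = Y i True False - Y i False False"
    if "i \<in> Eg" for i
    unfolding ipw_def[abs_def] integral_mult_right_zero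
    using expectation_ipw_contrast[where A = A and Y = Y, OF that Eg_sub pz kappa[rule_format, OF that]]
      nonzero that
    by simp
  have "DE_adj_hat N A Eg pz \<kappa> Y = (\<lambda>Z. 1 / real (card Eg) * (\<Sum>i\<in>Eg. ipw i Z))"
    by (simp add: fun_eq_iff DE_adj_hat_def ipw_def)
  then have "measure_pmf.expectation (Zdist N Eg pz) (DE_adj_hat N A Eg pz \<kappa> Y) =
      1 / real (card Eg) * (\<Sum>i\<in>Eg. measure_pmf.expectation (Zdist N Eg pz) (ipw i))"
    by (simp add: Bochner_Integration.integral_sum integrable_measure_pmf_finite finite_set_pmf_Zdist)
  also have "\<dots> = DE Eg Y"
    by (simp add: DE_def ipw_unbiased)
  finally show ?thesis .
qed

end
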